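(* Let $F$ be a fixed graph that is not a forest and let $k$ be a fixed positive integer. Then, as $n\to\infty$, \[\mathrm{ex}(n,M_k,F)=(1+o(1))\frac{\mathrm{ex}(n,F)^k}{k!}.\]
   Context: $M_k$ is the matching with $k$ edges. $\mathrm{ex}(n,F)$ is the maximum number of edges in an $F$-free graph on $n$ vertices. For graphs $H,G$, $\mathcal{N}(H,G)$ is the number of subgraphs of $G$ isomorphic to $H$, and $\mathrm{ex}(n,H,F)$ is the maximum of $\mathcal{N}(H,G)$ over $F$-free graphs $G$ on $n$ vertices. *)

theory Defs
  imports Main "HOL-Library.Landau_Symbols"
begin

type_synonym 'a graph = "'a set \<times> 'a set set"

definition graph :: "'a graph \<Rightarrow> bool" where
  "graph G \<longleftrightarrow> finite (fst G) \<and>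
     (\<forall>e\<in>snd G. \<exists>x y. x \<noteq> y \<and> e = {x, y} \<and> x \<in> fst G \<and> y \<in> fst G)"

definition subgraph :: "'a graph \<Rightarrow> 'a graph \<Rightarrow> bool" where
  "subgraph H G \<longleftrightarrow> graph H \<and> fst H \<subseteq> fst G \<and> snd H \<subseteq> snd G"

definition isomorphic :: "'a graph \<Rightarrow> 'b graph \<Rightarrow> bool" where
  "isomorphic G H \<longleftrightarrow> (\<exists>f. bij_betw f (fst G) (fst H) \<and>
     (\<forall>x\<in>fst G. \<forall>y\<in>fst G. {x, y} \<in> snd G \<longleftrightarrow> {f x, f y} \<in> snd H))"

definition count_copies :: "'b graph \<Rightarrow> 'a graph \<Rightarrow> nat" where
  "count_copies H G = card {H'. subgraph H' G \<and> isomorphic H' H}"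

definition F_free :: "'b graph \<Rightarrow> 'a graph \<Rightarrow> bool" where
  "F_free F G \<longleftrightarrow> \<not> (\<exists>H. subgraph H G \<and> isomorphic H F)"

definition graphs_on :: "nat \<Rightarrow> nat graph set" where
  "graphs_on n = {G. graph G \<and> fst G = {0..<n}}"

definition ex :: "nat \<Rightarrow> 'b graph \<Rightarrow> nat" where
  "ex n F = Max ((\<lambda>G. card (snd G)) ` {G \<in> graphs_on n. F_free F G})"

definition ex_gen :: "nat \<Rightarrow> 'c graph \<Rightarrow> 'b graph \<Rightarrow> nat" where
  "ex_gen n H F = Max ((\<lambda>G. count_copies H G) ` {G \<in> graphs_on n. F_free F G})"

definition matching :: "nat \<Rightarrow> nat graph" where
  "matching k = ({0..<2*k}, {{2*i, 2*i+1} | i. i < k})"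

definition has_cycle :: "'a graph \<Rightarrow> bool" where
  "has_cycle G \<longleftrightarrow> (\<exists>vs. length vs \<ge> 3 \<and> distinct vs \<and> set vs \<subseteq> fst G \<and>
     (\<forall>i<length vs. {vs ! i, vs ! ((i + 1) mod length vs)} \<in> snd G))"

definition forest :: "'a graph \<Rightarrow> bool" where
  "forest G \<longleftrightarrow> \<not> has_cycle G"

end

theory Submission
  imports Defs
begin

text \<open>
  The copies of M_k in a graph G are exactly the k-sets of pairwise disjoint edges of G. Hence
  N(M_k, G) is at most (e(G) choose k), which is at most e(G)^k / k!, and since at most
  2 v(G) e(G)^(k-1) of the k-sets of edges contain two intersecting edges, N(M_k, G) is at least
  (e(G) choose k) - 2 v(G) e(G)^(k-1). For an extremal F-free graph on n vertices both bounds are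
  (1 + o(1)) ex(n,F)^k / k! as soon as ex(n,F)/n tends to infinity.

  That ex(n,F)/n tends to infinity uses only that F contains a cycle, of length at most
  L = v(F). Take an edge-maximal graph on n vertices with maximum degree at most d and no cycle
  of length at most L; it is F-free. Two of its vertices of degree less than d are at distance at
  most L: joining them keeps the degree bound, so by maximality it closes a cycle of length at
  most L. Hence all but (d+1)^L vertices have degree d, and the graph has at least
  (d n - d (d+1)^L) / 2 edges.
\<close>

section \<open>Graphs and isomorphisms\<close>

lemma graph_edgeE:
  assumes "graph G" "e \<in> snd G"
  obtains x y where "x \<noteq> y" "e = {x, y}" "x \<in> fst G" "y \<in> fst G"
  using assms unfolding graph_def by meson

lemma graph_edges_subset_Pow: "graph G \<Longrightarrow> snd G \<subseteq> Pow (fst G)"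
  by (metis PowI empty_subsetI graph_edgeE insert_subset subsetI)

lemma graph_card_edge: "graph G \<Longrightarrow> e \<in> snd G \<Longrightarrow> card e = 2"
  by (metis card_2_iff graph_edgeE)

lemma finite_graph_edges: "graph G \<Longrightarrow> finite (snd G)"
  using graph_edges_subset_Pow unfolding graph_def by (meson finite_Pow_iff finite_subset)

lemma graphI:
  assumes "finite V" "\<And>e. e \<in> E \<Longrightarrow> card e = 2 \<and> e \<subseteq> V"
  shows "graph (V, E)"
  unfolding graph_def
proof (intro conjI ballI)
  fix e assume "e \<in> snd (V, E)"
  then have "card e = 2" "e \<subseteq> V" using assms(2) by auto
  then show "\<exists>x y. x \<noteq> y \<and> e = {x, y} \<and> x \<in> fst (V, E) \<and> y \<in> fst (V, E)"
    by (auto simp: card_2_iff)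
qed (simp add: assms(1))

lemma isomorphic_edge_imageE:
  assumes G: "graph G" and H: "graph H" and iso: "isomorphic G H"
  obtains f where "bij_betw f (fst G) (fst H)" "(`) f ` snd G = snd H"
proof -
  obtain f where f: "bij_betw f (fst G) (fst H)"
    and edges: "\<And>x y. x \<in> fst G \<Longrightarrow> y \<in> fst G \<Longrightarrow> {x, y} \<in> snd G \<longleftrightarrow> {f x, f y} \<in> snd H"
    using iso unfolding isomorphic_def by blast
  have "(`) f ` snd G \<subseteq> snd H"
  proof
    fix e' assume "e' \<in> (`) f ` snd G"
    then obtain e where e: "e \<in> snd G" "e' = f ` e" by blast
    obtain x y where "e = {x, y}" "x \<in> fst G" "y \<in> fst G"
      using graph_edgeE[OF G e(1)] by metis
    with e edges[of x y] show "e' \<in> snd H" by simp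
  qed
  moreover have "snd H \<subseteq> (`) f ` snd G"
  proof
    fix e assume "e \<in> snd H"
    then obtain a b where e: "e = {a, b}" "a \<in> fst H" "b \<in> fst H"
      using graph_edgeE[OF H] by metis
    then obtain x y where xy: "x \<in> fst G" "y \<in> fst G" "a = f x" "b = f y"
      using f unfolding bij_betw_def by blast
    then have "{x, y} \<in> snd G" using edges[of x y] \<open>e \<in> snd H\<close> e(1) by simp
    moreover have "e = f ` {x, y}" using e(1) xy by simp
    ultimately show "e \<in> (`) f ` snd G" by blast
  qed
  ultimately show ?thesis using f that by blast
qed

lemma isomorphic_edge_imageI:
  assumes G: "graph G" and f: "bij_betw f (fst G) (fst H)" and img: "(`) f ` snd G = snd H"
  shows "isomorphic G H"
proof -
  have inj: "inj_on ((`) f) (Pow (fst G))"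
    using f by (simp add: bij_betw_def inj_on_image_Pow)
  have "{x, y} \<in> snd G \<longleftrightarrow> {f x, f y} \<in> snd H" if "x \<in> fst G" "y \<in> fst G" for x y
  proof -
    have "{f x, f y} \<in> snd H \<longleftrightarrow> f ` {x, y} \<in> (`) f ` snd G" using img by simp
    also have "\<dots> \<longleftrightarrow> {x, y} \<in> snd G"
      using inj_on_image_mem_iff[OF inj, of "{x, y}" "snd G"] graph_edges_subset_Pow[OF G] that
      by simp
    finally show ?thesis by simp
  qed
  with f show "isomorphic G H" unfolding isomorphic_def by blast
qed

lemma isomorphic_sym:
  assumes "graph G" "graph H" "isomorphic G H"
  shows "isomorphic H G"
proof -
  obtain f where f: "bij_betw f (fst G) (fst H)" and img: "(`) f ` snd G = snd H"
    using isomorphic_edge_imageE[OF assms] by blast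
  let ?g = "inv_into (fst G) f"
  have "bij_betw ?g (fst H) (fst G)" using f by (rule bij_betw_inv_into)
  moreover have "(`) ?g ` snd H = snd G"
  proof -
    have "(`) ?g ` snd H = (\<lambda>e. ?g ` f ` e) ` snd G"
      unfolding img[symmetric] by (simp add: image_image)
    also have "\<dots> = (\<lambda>e. e) ` snd G"
    proof (rule image_cong[OF refl])
      fix e assume "e \<in> snd G"
      then have "e \<subseteq> fst G" using graph_edges_subset_Pow[OF assms(1)] by blast
      then show "?g ` f ` e = e"
        using f by (simp add: bij_betw_def inv_into_image_cancel)
    qed
    finally show ?thesis by simp
  qed
  ultimately show ?thesis by (rule isomorphic_edge_imageI[OF assms(2)])
qed

lemma isomorphic_card_edges:
  assumes "graph G" "graph H" "isomorphic G H"
  shows "card (snd G) = card (snd H)"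
proof -
  obtain f where f: "bij_betw f (fst G) (fst H)" and img: "(`) f ` snd G = snd H"
    using isomorphic_edge_imageE[OF assms] by blast
  have "inj_on ((`) f) (snd G)"
    using f graph_edges_subset_Pow[OF assms(1)]
    by (meson bij_betw_def inj_on_image_Pow inj_on_subset)
  with img show ?thesis using card_image by fastforce
qed

lemma isomorphic_no_isolated_vertices:
  assumes "graph G" "graph H" "isomorphic G H" "fst H = \<Union>(snd H)"
  shows "fst G = \<Union>(snd G)"
proof -
  obtain f where f: "bij_betw f (fst G) (fst H)" and img: "(`) f ` snd G = snd H"
    using isomorphic_edge_imageE[OF assms(1-3)] by blast
  have sub: "\<Union>(snd G) \<subseteq> fst G" using graph_edges_subset_Pow[OF assms(1)] by blast
  have "f ` fst G = f ` \<Union>(snd G)"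
    using f assms(4) img by (simp add: bij_betw_def image_Union)
  with sub f show ?thesis by (metis bij_betw_def inj_on_image_eq_iff order_refl)
qed

section \<open>Copies of the matching\<close>

lemma matching_edges: "snd (matching k) = (\<lambda>i. {2 * i, 2 * i + 1}) ` {..<k}"
  by (auto simp: matching_def)

lemma matching_vertices: "fst (matching k) = {0..<2 * k}"
  by (simp add: matching_def)

lemma graph_matching: "graph (matching k)"
  unfolding matching_def by (rule graphI) auto

lemma card_matching_edges: "card (snd (matching k)) = k"
proof -
  have "inj_on (\<lambda>i::nat. {2 * i, 2 * i + 1}) {..<k}"
    by (auto simp: inj_on_def doubleton_eq_iff)
  then show ?thesis by (simp add: matching_edges card_image)
qed

lemma matching_no_isolated_vertices: "fst (matching k) = \<Union>(snd (matching k))"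
proof
  show "fst (matching k) \<subseteq> \<Union>(snd (matching k))"
  proof
    fix j assume "j \<in> fst (matching k)"
    then have "j div 2 < k" "j \<in> {2 * (j div 2), 2 * (j div 2) + 1}"
      by (auto simp: matching_vertices)
    then show "j \<in> \<Union>(snd (matching k))" unfolding matching_edges by blast
  qed
qed (auto simp: matching_def)

lemma matching_copyD:
  assumes "graph H" "isomorphic H (matching k)"
  shows "H = (\<Union>(snd H), snd H)" and "card (snd H) = k"
proof -
  have "fst H = \<Union>(snd H)"
    using isomorphic_no_isolated_vertices[OF assms(1) graph_matching assms(2)]
      matching_no_isolated_vertices
    by blast
  then show "H = (\<Union>(snd H), snd H)" by (simp add: prod_eq_iff)
  show "card (snd H) = k"
    using isomorphic_card_edges[OF assms(1) graph_matching assms(2)] card_matching_edges by simp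
qed

lemma isomorphic_matching_Union:
  assumes T: "finite T" "card T = k" "pairwise disjnt T" and two: "\<And>e. e \<in> T \<Longrightarrow> card e = 2"
  shows "isomorphic (matching k) (\<Union>T, T)"
proof -
  obtain g where g: "bij_betw g {..<k} T"
    using ex_bij_betw_nat_finite[OF T(1)] T(2) by (auto simp: atLeast0LessThan)
  have "\<forall>i. \<exists>p. i < k \<longrightarrow> g i = {fst p, snd p}"
    using g two by (metis bij_betwE lessThan_iff card_2_iff fst_conv snd_conv)
  then obtain p where p: "\<And>i. i < k \<Longrightarrow> g i = {fst (p i), snd (p i)}"
    by metis
  define h where "h j = (if even j then fst (p (j div 2)) else snd (p (j div 2)))" for j
  have "(`) h ` snd (matching k) = (\<lambda>i. h ` {2 * i, 2 * i + 1}) ` {..<k}"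
    unfolding matching_edges by (simp add: image_image)
  also have "\<dots> = g ` {..<k}"
    by (rule image_cong[OF refl]) (simp add: h_def p insert_commute)
  finally have edges: "(`) h ` snd (matching k) = T"
    using g by (simp add: bij_betw_def)
  have finite_members: "finite e" if "e \<in> T" for e
    using two[OF that] by (simp add: card_ge_0_finite)
  have vertices: "h ` fst (matching k) = \<Union>T"
    using edges matching_no_isolated_vertices by (metis image_Union)
  \<comment> \<open>h is injective by counting: it maps the 2k vertices of M_k onto \<Union>T, which has 2k elements.\<close>
  have "card (\<Union>T) = 2 * k"
    using card_Union_disjoint[OF T(3) finite_members] two T(2) by simp
  then have "inj_on h (fst (matching k))"
    using vertices by (intro eq_card_imp_inj_on) (simp_all add: matching_vertices)
  with vertices have "bij_betw h (fst (matching k)) (fst (\<Union>T, T))"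
    by (simp add: bij_betw_def)
  moreover have "(`) h ` snd (matching k) = snd (\<Union>T, T)" using edges by simp
  ultimately show ?thesis by (rule isomorphic_edge_imageI[OF graph_matching])
qed

definition k_matchings :: "'a set set \<Rightarrow> nat \<Rightarrow> 'a set set set" where
  "k_matchings E k = {T. T \<subseteq> E \<and> card T = k \<and> pairwise disjnt T}"

lemma finite_subgraphs:
  assumes "graph G"
  shows "finite {H. subgraph H G}"
proof (rule finite_subset)
  show "{H. subgraph H G} \<subseteq> Pow (fst G) \<times> Pow (snd G)"
    unfolding subgraph_def by auto
  show "finite (Pow (fst G) \<times> Pow (snd G))"
    using assms finite_graph_edges unfolding graph_def by blast
qed

lemma count_copies_matching_le:
  assumes "graph G"
  shows "count_copies (matching k) G \<le> card (snd G) choose k"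
proof -
  let ?copies = "{H. subgraph H G \<and> isomorphic H (matching k)}"
  have "inj_on snd ?copies"
  proof (rule inj_onI)
    fix H H' assume "H \<in> ?copies" "H' \<in> ?copies" "snd H = snd H'"
    then show "H = H'"
      using matching_copyD(1) unfolding subgraph_def by (metis (no_types, lifting) mem_Collect_eq)
  qed
  moreover have "snd ` ?copies \<subseteq> {T. T \<subseteq> snd G \<and> card T = k}"
    using matching_copyD(2) unfolding subgraph_def by blast
  ultimately have "card ?copies \<le> card {T. T \<subseteq> snd G \<and> card T = k}"
    using finite_graph_edges[OF assms] by (intro card_inj_on_le) auto
  then show ?thesis
    unfolding count_copies_def using n_subsets[OF finite_graph_edges[OF assms]] by simp
qed

lemma k_matching_copy:
  assumes G: "graph G" and T: "T \<in> k_matchings (snd G) k"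
  shows "subgraph (\<Union>T, T) G" and "isomorphic (\<Union>T, T) (matching k)"
proof -
  have sub: "T \<subseteq> snd G" and card: "card T = k" and disj: "pairwise disjnt T"
    using T unfolding k_matchings_def by auto
  have finite_T: "finite T" using finite_subset[OF sub finite_graph_edges[OF G]] .
  have two: "card e = 2" if "e \<in> T" for e using graph_card_edge[OF G] sub that by blast
  have "\<Union>T \<subseteq> fst G" using graph_edges_subset_Pow[OF G] sub by blast
  then have "finite (\<Union>T)" using G unfolding graph_def by (blast intro: finite_subset)
  then have graph_T: "graph (\<Union>T, T)"
    using two by (intro graphI) (auto simp: Union_upper)
  then show "subgraph (\<Union>T, T) G"
    unfolding subgraph_def using \<open>\<Union>T \<subseteq> fst G\<close> sub by simp
  show "isomorphic (\<Union>T, T) (matching k)"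
    using isomorphic_sym[OF graph_matching graph_T isomorphic_matching_Union[OF finite_T card disj two]]
    .
qed

lemma card_k_matchings_le_count_copies:
  assumes "graph G"
  shows "card (k_matchings (snd G) k) \<le> count_copies (matching k) G"
proof -
  let ?copies = "{H. subgraph H G \<and> isomorphic H (matching k)}"
  have "inj_on (\<lambda>T. (\<Union>T, T)) (k_matchings (snd G) k)" by (rule inj_onI) simp
  moreover have "(\<lambda>T. (\<Union>T, T)) ` k_matchings (snd G) k \<subseteq> ?copies"
    using k_matching_copy[OF assms] by blast
  moreover have "finite ?copies"
    using finite_subgraphs[OF assms] by (rule finite_subset[rotated]) blast
  ultimately show ?thesis unfolding count_copies_def by (rule card_inj_on_le)
qed

definition degree :: "'a set set \<Rightarrow> 'a \<Rightarrow> nat" where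
  "degree E x = card {e \<in> E. x \<in> e}"

lemma degree_le_card_vertices:
  assumes "graph G"
  shows "degree (snd G) x \<le> card (fst G)"
proof -
  have "{e \<in> snd G. x \<in> e} \<subseteq> (\<lambda>y. {x, y}) ` fst G"
  proof
    fix e assume e: "e \<in> {e \<in> snd G. x \<in> e}"
    then obtain a b where "e = {a, b}" "a \<in> fst G" "b \<in> fst G"
      using graph_edgeE[OF assms] by blast
    with e show "e \<in> (\<lambda>y. {x, y}) ` fst G" by (auto simp: insert_commute)
  qed
  then have "degree (snd G) x \<le> card ((\<lambda>y. {x, y}) ` fst G)"
    unfolding degree_def using assms unfolding graph_def by (blast intro: card_mono)
  also have "\<dots> \<le> card (fst G)" by (rule card_image_le) (use assms in \<open>simp add: graph_def\<close>)
  finally show ?thesis .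
qed

definition intersecting_pairs :: "'a set set \<Rightarrow> ('a set \<times> 'a set) set" where
  "intersecting_pairs E = {(e, e'). e \<in> E \<and> e' \<in> E \<and> e \<noteq> e' \<and> \<not> disjnt e e'}"

lemma card_intersecting_pairs_le:
  assumes "graph G"
  shows "card (intersecting_pairs (snd G)) \<le> 2 * card (fst G) * card (snd G)"
proof -
  let ?E = "snd G"
  let ?at = "\<lambda>x. {e' \<in> ?E. x \<in> e'}"
  have fin: "finite ?E" by (rule finite_graph_edges[OF assms])
  have "intersecting_pairs ?E \<subseteq> (\<Union>e\<in>?E. \<Union>x\<in>e. {e} \<times> ?at x)"
    unfolding intersecting_pairs_def disjnt_def by blast
  then have "card (intersecting_pairs ?E) \<le> card (\<Union>e\<in>?E. \<Union>x\<in>e. {e} \<times> ?at x)"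
    by (rule card_mono[rotated]) (rule finite_subset[of _ "?E \<times> ?E"], auto simp: fin)
  also have "\<dots> \<le> (\<Sum>e\<in>?E. card (\<Union>x\<in>e. {e} \<times> ?at x))" by (rule card_UN_le[OF fin])
  also have "\<dots> \<le> (\<Sum>e\<in>?E. \<Sum>x\<in>e. degree ?E x)"
  proof (rule sum_mono)
    fix e assume "e \<in> ?E"
    then have "finite e" using graph_card_edge[OF assms] by (simp add: card_ge_0_finite)
    then have "card (\<Union>x\<in>e. {e} \<times> ?at x) \<le> (\<Sum>x\<in>e. card ({e} \<times> ?at x))"
      by (rule card_UN_le)
    then show "card (\<Union>x\<in>e. {e} \<times> ?at x) \<le> (\<Sum>x\<in>e. degree ?E x)"
      by (simp add: degree_def card_cartesian_product)
  qed
  also have "\<dots> \<le> (\<Sum>e\<in>?E. 2 * card (fst G))"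
  proof (rule sum_mono)
    fix e assume "e \<in> ?E"
    then have "(\<Sum>x\<in>e. degree ?E x) \<le> (\<Sum>x\<in>e. card (fst G))"
      using degree_le_card_vertices[OF assms] by (intro sum_mono)
    then show "(\<Sum>x\<in>e. degree ?E x) \<le> 2 * card (fst G)"
      using graph_card_edge[OF assms \<open>e \<in> ?E\<close>] by simp
  qed
  finally show ?thesis by (simp add: mult.commute)
qed

lemma card_ksubsets_containing_pair_le:
  assumes "finite E" "a \<in> E" "b \<in> E" "a \<noteq> b"
  shows "card {T. T \<subseteq> E \<and> card T = k \<and> a \<in> T \<and> b \<in> T} \<le> card E ^ (k - 2)"
proof -
  let ?B = "{T. T \<subseteq> E \<and> card T = k \<and> a \<in> T \<and> b \<in> T}"
  have "inj_on (\<lambda>T. T - {a, b}) ?B"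
    by (rule inj_onI) blast
  moreover have "(\<lambda>T. T - {a, b}) ` ?B \<subseteq> {S. S \<subseteq> E \<and> card S = k - 2}"
  proof
    fix S assume "S \<in> (\<lambda>T. T - {a, b}) ` ?B"
    then obtain T where T: "T \<subseteq> E" "card T = k" "a \<in> T" "b \<in> T" "S = T - {a, b}" by blast
    then have "card S = k - 2"
      using assms(1,4) by (simp add: card_Diff_subset finite_subset)
    with T show "S \<in> {S. S \<subseteq> E \<and> card S = k - 2}" by blast
  qed
  ultimately have "card ?B \<le> card {S. S \<subseteq> E \<and> card S = k - 2}"
    using assms(1) by (intro card_inj_on_le) auto
  also have "\<dots> = card E choose (k - 2)" by (rule n_subsets[OF assms(1)])
  also have "\<dots> \<le> card E ^ (k - 2)"
    by (rule order_trans[OF _ binomial_fact_pow]) simp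
  finally show ?thesis .
qed

lemma k_matchings_eq_ksubsets:
  assumes "finite E" "k \<le> 1"
  shows "k_matchings E k = {T. T \<subseteq> E \<and> card T = k}"
proof -
  have "pairwise disjnt T" if "T \<subseteq> E" "card T = k" for T
  proof -
    have "card T \<le> Suc 0" using that(2) assms(2) by simp
    then have "\<forall>e\<in>T. \<forall>e'\<in>T. e = e'"
      using card_le_Suc0_iff_eq[OF finite_subset[OF that(1) assms(1)]] by blast
    then show ?thesis unfolding pairwise_def by blast
  qed
  then show ?thesis unfolding k_matchings_def by blast
qed

lemma non_k_matchings_subset:
  "{T. T \<subseteq> E \<and> card T = k} - k_matchings E k
    \<subseteq> (\<Union>p\<in>intersecting_pairs E. {T. T \<subseteq> E \<and> card T = k \<and> fst p \<in> T \<and> snd p \<in> T})"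
proof
  fix T assume "T \<in> {T. T \<subseteq> E \<and> card T = k} - k_matchings E k"
  then have T: "T \<subseteq> E" "card T = k" and "\<not> pairwise disjnt T"
    unfolding k_matchings_def by auto
  then obtain e e' where "e \<in> T" "e' \<in> T" "e \<noteq> e'" "\<not> disjnt e e'"
    unfolding pairwise_def by blast
  with T have "(e, e') \<in> intersecting_pairs E" unfolding intersecting_pairs_def by auto
  with T \<open>e \<in> T\<close> \<open>e' \<in> T\<close>
  show "T \<in> (\<Union>p\<in>intersecting_pairs E. {T. T \<subseteq> E \<and> card T = k \<and> fst p \<in> T \<and> snd p \<in> T})"
    by force
qed

lemma card_non_k_matchings_le:
  assumes "graph G"
  shows "card ({T. T \<subseteq> snd G \<and> card T = k} - k_matchings (snd G) k)
    \<le> 2 * card (fst G) * card (snd G) ^ (k - 1)"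
proof (cases "k \<ge> 2")
  case False
  then show ?thesis using k_matchings_eq_ksubsets[OF finite_graph_edges[OF assms], of k] by simp
next
  case True
  let ?E = "snd G" and ?P = "intersecting_pairs (snd G)"
  define B where "B p = {T. T \<subseteq> ?E \<and> card T = k \<and> fst p \<in> T \<and> snd p \<in> T}" for p
  have fin: "finite ?E" by (rule finite_graph_edges[OF assms])
  have "(\<Union>p\<in>?P. B p) \<subseteq> Pow ?E" unfolding B_def by blast
  then have "card ({T. T \<subseteq> ?E \<and> card T = k} - k_matchings ?E k) \<le> card (\<Union>p\<in>?P. B p)"
    using fin non_k_matchings_subset[of ?E k] unfolding B_def
    by (meson card_mono finite_Pow_iff finite_subset)
  also have "\<dots> \<le> (\<Sum>p\<in>?P. card (B p))"
  proof (rule card_UN_le)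
    show "finite ?P" unfolding intersecting_pairs_def
      by (rule finite_subset[of _ "?E \<times> ?E"]) (use fin in auto)
  qed
  also have "\<dots> \<le> (\<Sum>p\<in>?P. card ?E ^ (k - 2))"
  proof (rule sum_mono)
    fix p assume "p \<in> ?P"
    then obtain e e' where "p = (e, e')" "e \<in> ?E" "e' \<in> ?E" "e \<noteq> e'"
      unfolding intersecting_pairs_def by blast
    then show "card (B p) \<le> card ?E ^ (k - 2)"
      unfolding B_def using card_ksubsets_containing_pair_le[OF fin] by simp
  qed
  also have "\<dots> \<le> 2 * card (fst G) * card ?E * card ?E ^ (k - 2)"
    using card_intersecting_pairs_le[OF assms] by (simp add: mult_right_mono)
  also have "\<dots> = 2 * card (fst G) * card ?E ^ (k - 1)"
  proof -
    have "k - 1 = Suc (k - 2)" using True by simp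
    then show ?thesis by (simp only: power_Suc mult.assoc)
  qed
  finally show ?thesis .
qed

lemma count_copies_matching_ge:
  assumes "graph G"
  shows "real (card (snd G) choose k) - 2 * real (card (fst G)) * real (card (snd G)) ^ (k - 1)
    \<le> real (count_copies (matching k) G)"
proof -
  let ?K = "{T. T \<subseteq> snd G \<and> card T = k}" and ?M = "k_matchings (snd G) k"
  have fin: "finite ?K" using finite_graph_edges[OF assms] by simp
  have sub: "?M \<subseteq> ?K" by (auto simp: k_matchings_def)
  have "card ?K = card ?M + card (?K - ?M)"
    using card_Diff_subset[OF finite_subset[OF sub fin] sub] card_mono[OF fin sub] by simp
  then have "real (card (snd G) choose k) = real (card ?M) + real (card (?K - ?M))"
    using n_subsets[OF finite_graph_edges[OF assms]] by simp
  moreover have "real (card (?K - ?M)) \<le> real (2 * card (fst G) * card (snd G) ^ (k - 1))"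
    using card_non_k_matchings_le[OF assms, of k] by (simp only: of_nat_le_iff)
  moreover have "real (card ?M) \<le> real (count_copies (matching k) G)"
    using card_k_matchings_le_count_copies[OF assms, of k] by (simp only: of_nat_le_iff)
  ultimately show ?thesis by simp
qed

section \<open>Short cycles and balls\<close>

definition cycle_in :: "'a set set \<Rightarrow> 'a list \<Rightarrow> bool" where
  "cycle_in E vs \<longleftrightarrow> 3 \<le> length vs \<and> distinct vs \<and>
     (\<forall>i<length vs. {vs ! i, vs ! ((i + 1) mod length vs)} \<in> E)"

definition no_cycles_upto :: "nat \<Rightarrow> 'a set set \<Rightarrow> bool" where
  "no_cycles_upto L E \<longleftrightarrow> (\<forall>vs. cycle_in E vs \<longrightarrow> L < length vs)"

lemma has_cycle_iff_cycle_in: "has_cycle G \<longleftrightarrow> (\<exists>vs. cycle_in (snd G) vs \<and> set vs \<subseteq> fst G)"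
  unfolding has_cycle_def cycle_in_def by blast

lemma no_cycles_upto_empty: "no_cycles_upto L {}"
  unfolding no_cycles_upto_def
proof (intro allI impI)
  fix vs :: "'a list" assume "cycle_in {} vs"
  moreover have "0 < length vs" using \<open>cycle_in {} vs\<close> unfolding cycle_in_def by linarith
  ultimately show "L < length vs" unfolding cycle_in_def by blast
qed

lemma cycle_in_mono: "E \<subseteq> E' \<Longrightarrow> cycle_in E vs \<Longrightarrow> cycle_in E' vs"
  unfolding cycle_in_def by blast

lemma cycle_in_map:
  assumes vs: "cycle_in E vs" and inj: "inj_on f (set vs)"
    and edges: "\<And>x y. {x, y} \<in> E \<Longrightarrow> {f x, f y} \<in> E'"
  shows "cycle_in E' (map f vs)"
proof -
  have "{map f vs ! i, map f vs ! ((i + 1) mod length vs)} \<in> E'" if "i < length vs" for i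
  proof -
    have "0 < length vs" using that by linarith
    then have "(i + 1) mod length vs < length vs" by simp
    then show ?thesis using vs that edges unfolding cycle_in_def by simp
  qed
  then show ?thesis using vs inj unfolding cycle_in_def by (simp add: distinct_map)
qed

lemma F_free_if_no_cycles_upto:
  assumes F: "graph F" "\<not> forest F" and G: "no_cycles_upto (card (fst F)) (snd G)"
  shows "F_free F G"
  unfolding F_free_def
proof
  assume "\<exists>H. subgraph H G \<and> isomorphic H F"
  then obtain H where sub: "subgraph H G" and iso: "isomorphic H F" by blast
  have H: "graph H" using sub by (simp add: subgraph_def)
  obtain f where f: "bij_betw f (fst F) (fst H)" and img: "(`) f ` snd F = snd H"
    using isomorphic_edge_imageE[OF F(1) H isomorphic_sym[OF H F(1) iso]] by blast
  obtain vs where vs: "cycle_in (snd F) vs" "set vs \<subseteq> fst F"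
    using F(2) unfolding forest_def has_cycle_iff_cycle_in by blast
  have "cycle_in (snd H) (map f vs)"
  proof (rule cycle_in_map[OF vs(1)])
    show "inj_on f (set vs)" using f vs(2) by (meson bij_betw_def inj_on_subset)
    fix x y assume "{x, y} \<in> snd F"
    then have "f ` {x, y} \<in> snd H" using img by blast
    then show "{f x, f y} \<in> snd H" by simp
  qed
  then have "cycle_in (snd G) (map f vs)"
    using sub cycle_in_mono unfolding subgraph_def by blast
  moreover have "length (map f vs) \<le> card (fst F)"
    using vs F(1) distinct_card[of vs] card_mono[of "fst F" "set vs"]
    unfolding cycle_in_def graph_def by simp
  ultimately show False using G unfolding no_cycles_upto_def by fastforce
qed

definition neighbours :: "'a set set \<Rightarrow> 'a \<Rightarrow> 'a set" where
  "neighbours E x = {y. {x, y} \<in> E}"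

fun reach :: "'a set set \<Rightarrow> 'a \<Rightarrow> nat \<Rightarrow> 'a set" where
  "reach E u 0 = {u}"
| "reach E u (Suc r) = reach E u r \<union> (\<Union>x\<in>reach E u r. neighbours E x)"

lemma reach_mono: "r \<le> s \<Longrightarrow> reach E u r \<subseteq> reach E u s"
proof (induction s rule: dec_induct)
  case (step s)
  then show ?case by auto
qed simp

lemma self_in_reach: "u \<in> reach E u r"
  using reach_mono[of 0 r E u] by simp

lemma reach_Suc_neighbour:
  assumes "{y, z} \<in> E"
  shows "reach E z r \<subseteq> reach E y (Suc r)"
proof (induction r)
  case 0
  then show ?case using assms by (auto simp: neighbours_def)
next
  case (Suc r)
  have "reach E z (Suc r) = reach E z r \<union> (\<Union>x\<in>reach E z r. neighbours E x)"
    by (rule reach.simps(2))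
  also have "\<dots> \<subseteq> reach E y (Suc r) \<union> (\<Union>x\<in>reach E y (Suc r). neighbours E x)"
    using Suc.IH by blast
  also have "\<dots> = reach E y (Suc (Suc r))" by (rule reach.simps(2)[symmetric])
  finally show ?case .
qed

lemma reach_sym: "w \<in> reach E u r \<Longrightarrow> u \<in> reach E w r"
proof (induction r arbitrary: w)
  case (Suc r)
  show ?case
  proof (cases "w \<in> reach E u r")
    case True
    then show ?thesis using Suc.IH reach_mono[of r "Suc r" E w] by auto
  next
    case False
    then obtain x where x: "x \<in> reach E u r" "{x, w} \<in> E"
      using Suc.prems by (auto simp: neighbours_def)
    have "{w, x} \<in> E" using x(2) by (simp add: insert_commute)
    then have "reach E x r \<subseteq> reach E w (Suc r)" by (rule reach_Suc_neighbour)
    then show ?thesis using Suc.IH[OF x(1)] by blast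
  qed
qed simp

lemma card_neighbours_le_degree:
  assumes "finite E"
  shows "finite (neighbours E x)" and "card (neighbours E x) \<le> degree E x"
proof -
  have inj: "inj_on (\<lambda>y. {x, y}) (neighbours E x)" by (auto simp: inj_on_def doubleton_eq_iff)
  have sub: "(\<lambda>y. {x, y}) ` neighbours E x \<subseteq> {e \<in> E. x \<in> e}" by (auto simp: neighbours_def)
  have fin: "finite {e \<in> E. x \<in> e}" using assms by simp
  show "finite (neighbours E x)" using inj_on_finite[OF inj sub fin] .
  show "card (neighbours E x) \<le> degree E x"
    unfolding degree_def using card_inj_on_le[OF inj sub fin] .
qed

lemma card_reach_le:
  assumes "finite E" and "\<And>x. degree E x \<le> d"
  shows "finite (reach E u r) \<and> card (reach E u r) \<le> (d + 1) ^ r"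
proof (induction r)
  case (Suc r)
  then have fin: "finite (reach E u r)" by simp
  have "card (\<Union>x\<in>reach E u r. neighbours E x) \<le> (\<Sum>x\<in>reach E u r. card (neighbours E x))"
    by (rule card_UN_le[OF fin])
  also have "\<dots> \<le> (\<Sum>x\<in>reach E u r. d)"
    using card_neighbours_le_degree(2)[OF assms(1)] assms(2) by (intro sum_mono) (meson le_trans)
  finally have "card (reach E u (Suc r)) \<le> card (reach E u r) + card (reach E u r) * d"
    using card_Un_le[of "reach E u r" "\<Union>x\<in>reach E u r. neighbours E x"] by simp
  also have "\<dots> = card (reach E u r) * (d + 1)" by simp
  also have "\<dots> \<le> (d + 1) ^ r * (d + 1)"
    using Suc.IH by (intro mult_right_mono) auto
  finally show ?case
    using fin card_neighbours_le_degree(1)[OF assms(1)] by (simp add: mult.commute)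
qed simp

lemma mod_add_ne_self:
  fixes i m t :: nat
  assumes "i < m" "0 < t" "t < m"
  shows "(i + t) mod m \<noteq> i"
proof (cases "i + t < m")
  case True
  then show ?thesis using assms by simp
next
  case False
  then have "(i + t) mod m = i + t - m" using assms by (simp add: mod_if)
  then show ?thesis using assms False by simp
qed

lemma cycle_in_edge_inj:
  assumes vs: "cycle_in E vs" and i: "i < length vs" and j: "j < length vs"
    and eq: "{vs ! i, vs ! ((i + 1) mod length vs)} = {vs ! j, vs ! ((j + 1) mod length vs)}"
  shows "i = j"
proof (rule ccontr)
  assume "i \<noteq> j"
  let ?m = "length vs"
  have m: "3 \<le> ?m" and dist: "distinct vs" using vs unfolding cycle_in_def by auto
  then have pos: "0 < ?m" by linarith
  have nth_inj: "vs ! a = vs ! b \<longleftrightarrow> a = b" if "a < ?m" "b < ?m" for a b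
    using dist that by (simp add: nth_eq_iff_index_eq)
  have "(i + 1) mod ?m < ?m" "(j + 1) mod ?m < ?m" using pos by simp_all
  then have ij: "i = (j + 1) mod ?m" and ji: "j = (i + 1) mod ?m"
    using eq \<open>i \<noteq> j\<close> nth_inj i j by (auto simp: doubleton_eq_iff)
  from ij have "i = ((i + 1) mod ?m + 1) mod ?m" unfolding ji .
  also have "\<dots> = (i + 2) mod ?m" unfolding mod_add_left_eq by simp
  finally have "(i + 2) mod ?m = i" by simp
  then show False using mod_add_ne_self[OF i, of 2] m by simp
qed

lemma cycle_minus_edge_reach:
  assumes i: "i < length vs"
    and edges: "\<And>j. j < length vs \<Longrightarrow> j \<noteq> i \<Longrightarrow> {vs ! j, vs ! ((j + 1) mod length vs)} \<in> E"
  shows "vs ! i \<in> reach E (vs ! ((i + 1) mod length vs)) (length vs - 1)"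
proof -
  let ?m = "length vs" and ?p = "(i + 1) mod length vs"
  have pos: "0 < ?m" using i by linarith
  have walk: "vs ! ((?p + j) mod ?m) \<in> reach E (vs ! ?p) j" if "j < ?m" for j
    using that
  proof (induction j)
    case 0
    then show ?case by (simp add: self_in_reach)
  next
    case (Suc j)
    let ?q = "(?p + j) mod ?m"
    have "?q = (i + Suc j) mod ?m" by (simp add: mod_add_left_eq)
    then have "?q \<noteq> i" using mod_add_ne_self[OF i, of "Suc j"] Suc.prems by simp
    moreover have "?q < ?m" using pos by simp
    ultimately have "{vs ! ?q, vs ! ((?q + 1) mod ?m)} \<in> E" using edges by blast
    moreover have "(?q + 1) mod ?m = (?p + Suc j) mod ?m"
      using mod_add_left_eq[of "?p + j" ?m 1] by simp
    moreover have "vs ! ?q \<in> reach E (vs ! ?p) j" using Suc by simp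
    ultimately show ?case by (auto simp: neighbours_def)
  qed
  have "(?p + (?m - 1)) mod ?m = (i + 1 + (?m - 1)) mod ?m" by (rule mod_add_left_eq)
  also have "i + 1 + (?m - 1) = i + ?m" using pos by simp
  finally have "(?p + (?m - 1)) mod ?m = i" using i by simp
  then show ?thesis using walk[of "?m - 1"] i by simp
qed

lemma reach_if_insert_breaks_no_cycles_upto:
  assumes E: "no_cycles_upto L E" and insert: "\<not> no_cycles_upto L (insert {u, w} E)"
  shows "w \<in> reach E u L"
proof -
  \<comment> \<open>The short cycle must use the new edge, and the rest of it is a path from w to u.\<close>
  obtain vs where vs: "cycle_in (insert {u, w} E) vs" "length vs \<le> L"
    using insert unfolding no_cycles_upto_def by (meson not_less)
  let ?m = "length vs" and ?p = "\<lambda>j. (j + 1) mod length vs"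
  have "\<not> cycle_in E vs" using E vs(2) unfolding no_cycles_upto_def by (meson not_less)
  then obtain i where i: "i < ?m" "{vs ! i, vs ! ?p i} \<notin> E"
    using vs(1) unfolding cycle_in_def by blast
  moreover have "{vs ! i, vs ! ?p i} \<in> insert {u, w} E"
    using vs(1) i(1) unfolding cycle_in_def by blast
  ultimately have edge_i: "{vs ! i, vs ! ?p i} = {u, w}" by simp
  have "{vs ! j, vs ! ?p j} \<in> E" if "j < ?m" "j \<noteq> i" for j
  proof -
    have "{vs ! j, vs ! ?p j} \<in> insert {u, w} E" using vs(1) that(1) unfolding cycle_in_def by blast
    moreover have "{vs ! j, vs ! ?p j} \<noteq> {vs ! i, vs ! ?p i}"
      using cycle_in_edge_inj[OF vs(1) that(1) i(1)] that(2) by blast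
    ultimately show ?thesis using edge_i by simp
  qed
  then have "vs ! i \<in> reach E (vs ! ?p i) (?m - 1)" by (rule cycle_minus_edge_reach[OF i(1)])
  moreover have "?m - 1 \<le> L" using vs(2) by simp
  ultimately have reach: "vs ! i \<in> reach E (vs ! ?p i) L" by (meson reach_mono subsetD)
  consider "vs ! i = u" "vs ! ?p i = w" | "vs ! i = w" "vs ! ?p i = u"
    using edge_i unfolding doubleton_eq_iff by blast
  then show ?thesis
  proof cases
    case 1
    then show ?thesis using reach_sym[OF reach] by simp
  next
    case 2
    then show ?thesis using reach by simp
  qed
qed

section \<open>Edge-maximal graphs of bounded degree and large girth\<close>

lemma degree_insert_le:
  assumes "finite E"
  shows "degree (insert e E) x \<le> Suc (degree E x)"
proof -
  have "{e' \<in> insert e E. x \<in> e'} \<subseteq> insert e {e' \<in> E. x \<in> e'}" by blast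
  then have "degree (insert e E) x \<le> card (insert e {e' \<in> E. x \<in> e'})"
    unfolding degree_def using assms by (intro card_mono) simp_all
  also have "\<dots> \<le> Suc (degree E x)"
    unfolding degree_def using assms by (simp add: card_insert_if)
  finally show ?thesis .
qed

lemma degree_insert_notin: "x \<notin> e \<Longrightarrow> degree (insert e E) x = degree E x"
proof -
  assume "x \<notin> e"
  then have "{e' \<in> insert e E. x \<in> e'} = {e' \<in> E. x \<in> e'}" by blast
  then show ?thesis by (simp add: degree_def)
qed

lemma sum_degree_eq_twice_card_edges:
  assumes "graph G"
  shows "(\<Sum>x\<in>fst G. degree (snd G) x) = 2 * card (snd G)"
proof -
  have fin: "finite (fst G)" "finite (snd G)"
    using assms finite_graph_edges unfolding graph_def by blast+
  have "(\<Sum>x\<in>fst G. degree (snd G) x) = (\<Sum>x\<in>fst G. \<Sum>e\<in>{e \<in> snd G. x \<in> e}. 1)"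
    by (simp add: degree_def)
  also have "\<dots> = (\<Sum>e\<in>snd G. \<Sum>x\<in>{x \<in> fst G. x \<in> e}. 1)"
    by (rule sum.swap_restrict[OF fin])
  also have "\<dots> = (\<Sum>e\<in>snd G. 2)"
  proof (rule sum.cong[OF refl])
    fix e assume e: "e \<in> snd G"
    then have "{x \<in> fst G. x \<in> e} = e" using graph_edges_subset_Pow[OF assms] by blast
    then show "(\<Sum>x\<in>{x \<in> fst G. x \<in> e}. 1) = (2 :: nat)" using graph_card_edge[OF assms e] by simp
  qed
  finally show ?thesis by simp
qed

lemma twice_card_edges_ge:
  assumes G: "graph G" and D: "D \<subseteq> fst G" and high: "\<And>x. x \<in> fst G - D \<Longrightarrow> d \<le> degree (snd G) x"
  shows "d * (card (fst G) - card D) \<le> 2 * card (snd G)"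
proof -
  have fin: "finite (fst G)" using G by (simp add: graph_def)
  have "d * (card (fst G) - card D) = (\<Sum>x\<in>fst G - D. d)"
    using card_Diff_subset[OF finite_subset[OF D fin] D] by simp
  also have "\<dots> \<le> (\<Sum>x\<in>fst G - D. degree (snd G) x)" using high by (rule sum_mono)
  also have "\<dots> \<le> (\<Sum>x\<in>fst G. degree (snd G) x)" using fin by (intro sum_mono2) auto
  also have "\<dots> = 2 * card (snd G)" by (rule sum_degree_eq_twice_card_edges[OF G])
  finally show ?thesis .
qed

lemma graphs_on_insert_edge:
  assumes G: "G \<in> graphs_on n" and uw: "u \<in> fst G" "w \<in> fst G" "u \<noteq> w"
  shows "(fst G, insert {u, w} (snd G)) \<in> graphs_on n"
proof -
  have graph: "graph G" and V: "fst G = {0..<n}" using G by (auto simp: graphs_on_def)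
  have "graph (fst G, insert {u, w} (snd G))"
  proof (rule graphI)
    show "finite (fst G)" using graph by (simp add: graph_def)
    fix e assume "e \<in> insert {u, w} (snd G)"
    then show "card e = 2 \<and> e \<subseteq> fst G"
      using graph_card_edge[OF graph] graph_edges_subset_Pow[OF graph] uw by auto
  qed
  with V show ?thesis by (simp add: graphs_on_def)
qed

lemma finite_graphs_on: "finite (graphs_on n)"
proof (rule finite_subset)
  show "graphs_on n \<subseteq> {{0..<n}} \<times> Pow (Pow {0..<n})"
  proof
    fix G assume "G \<in> graphs_on n"
    then have "graph G" "fst G = {0..<n}" by (simp_all add: graphs_on_def)
    then show "G \<in> {{0..<n}} \<times> Pow (Pow {0..<n})"
      using graph_edges_subset_Pow[of G] by (simp add: mem_Times_iff)
  qed
qed simp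

lemma empty_graph_on: "({0..<n}, {}) \<in> graphs_on n"
  unfolding graphs_on_def by (auto intro: graphI)

definition degree_girth_graphs :: "nat \<Rightarrow> nat \<Rightarrow> nat \<Rightarrow> nat graph set" where
  "degree_girth_graphs n d L =
     {G \<in> graphs_on n. (\<forall>x. degree (snd G) x \<le> d) \<and> no_cycles_upto L (snd G)}"

lemma exists_edge_maximal_degree_girth_graph:
  obtains G where "G \<in> degree_girth_graphs n d L"
    and "\<And>G'. G' \<in> degree_girth_graphs n d L \<Longrightarrow> card (snd G') \<le> card (snd G)"
proof -
  let ?Fam = "degree_girth_graphs n d L"
  have fin: "finite ?Fam" unfolding degree_girth_graphs_def using finite_graphs_on by simp
  have "({0..<n}, {}) \<in> ?Fam"
    unfolding degree_girth_graphs_def mem_Collect_eq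
    using empty_graph_on[of n] no_cycles_upto_empty[of L] by (simp add: degree_def)
  with fin have "Max ((\<lambda>G. card (snd G)) ` ?Fam) \<in> (\<lambda>G. card (snd G)) ` ?Fam"
    by (intro Max_in) auto
  then obtain G where "G \<in> ?Fam" and G_max: "card (snd G) = Max ((\<lambda>G. card (snd G)) ` ?Fam)"
    by auto
  moreover have "card (snd G') \<le> card (snd G)" if "G' \<in> ?Fam" for G'
    unfolding G_max using fin that by (intro Max_ge) auto
  ultimately show ?thesis using that by blast
qed

lemma low_degree_vertices_close:
  assumes G: "G \<in> degree_girth_graphs n d L"
    and maximal: "\<And>G'. G' \<in> degree_girth_graphs n d L \<Longrightarrow> card (snd G') \<le> card (snd G)"
    and L: "1 \<le> L"
    and u: "u \<in> fst G" "degree (snd G) u < d" and w: "w \<in> fst G" "degree (snd G) w < d"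
  shows "w \<in> reach (snd G) u L"
proof -
  have G_on: "G \<in> graphs_on n" and deg: "\<forall>x. degree (snd G) x \<le> d"
    and girth: "no_cycles_upto L (snd G)"
    using G by (simp_all add: degree_girth_graphs_def)
  consider "w = u" | "{u, w} \<in> snd G" | "w \<noteq> u" "{u, w} \<notin> snd G" by blast
  then show ?thesis
  proof cases
    case 1
    then show ?thesis by (simp add: self_in_reach)
  next
    case 2
    then have "w \<in> reach (snd G) u 1" by (simp add: neighbours_def)
    then show ?thesis using reach_mono[OF L, of "snd G" u] by blast
  next
    case 3
    let ?G' = "(fst G, insert {u, w} (snd G))"
    have fin: "finite (snd G)" using G_on finite_graph_edges[of G] by (simp add: graphs_on_def)
    have "degree (snd ?G') x \<le> d" for x
    proof (cases "x \<in> {u, w}")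
      case True
      then have "degree (snd G) x < d" using u w by auto
      then show ?thesis using degree_insert_le[OF fin, of "{u, w}" x] by simp
    next
      case False
      then show ?thesis using degree_insert_notin[OF False] deg by simp
    qed
    moreover have "?G' \<in> graphs_on n" using graphs_on_insert_edge[OF G_on u(1) w(1)] 3(1) by simp
    moreover have "\<not> card (snd ?G') \<le> card (snd G)" using 3(2) fin by simp
    ultimately have "\<not> no_cycles_upto L (snd ?G')"
      using maximal unfolding degree_girth_graphs_def by blast
    then show ?thesis using reach_if_insert_breaks_no_cycles_upto[OF girth] by simp
  qed
qed

lemma card_low_degree_vertices_le:
  assumes G: "G \<in> degree_girth_graphs n d L"
    and maximal: "\<And>G'. G' \<in> degree_girth_graphs n d L \<Longrightarrow> card (snd G') \<le> card (snd G)"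
    and L: "1 \<le> L"
  shows "card {x \<in> fst G. degree (snd G) x < d} \<le> (d + 1) ^ L"
proof (cases "{x \<in> fst G. degree (snd G) x < d} = {}")
  case False
  then obtain u where u: "u \<in> fst G" "degree (snd G) u < d" by blast
  have G_on: "G \<in> graphs_on n" and deg: "\<forall>x. degree (snd G) x \<le> d"
    using G by (simp_all add: degree_girth_graphs_def)
  have "finite (snd G)" using G_on finite_graph_edges[of G] by (simp add: graphs_on_def)
  then have reach: "finite (reach (snd G) u L) \<and> card (reach (snd G) u L) \<le> (d + 1) ^ L"
    by (rule card_reach_le[OF _ deg[rule_format]])
  have "{x \<in> fst G. degree (snd G) x < d} \<subseteq> reach (snd G) u L"
    using low_degree_vertices_close[OF G maximal L u] by blast
  then show ?thesis using reach by (meson card_mono le_trans)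
qed (metis card.empty le0)

lemma exists_graph_no_cycles_upto:
  assumes L: "1 \<le> L"
  obtains G where "G \<in> graphs_on n" "no_cycles_upto L (snd G)"
    "d * n \<le> 2 * card (snd G) + d * (d + 1) ^ L"
proof -
  obtain G where G: "G \<in> degree_girth_graphs n d L"
    and maximal: "\<And>G'. G' \<in> degree_girth_graphs n d L \<Longrightarrow> card (snd G') \<le> card (snd G)"
    using exists_edge_maximal_degree_girth_graph[of n d L] by blast
  then have G_on: "G \<in> graphs_on n" and girth: "no_cycles_upto L (snd G)"
    by (simp_all add: degree_girth_graphs_def)
  then have graph: "graph G" and V: "fst G = {0..<n}" by (simp_all add: graphs_on_def)
  define D where "D = {x \<in> fst G. degree (snd G) x < d}"
  have "d * n \<le> d * ((n - card D) + card D)" by (intro mult_le_mono2) linarith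
  also have "\<dots> = d * (n - card D) + d * card D" by (simp add: add_mult_distrib2)
  also have "\<dots> \<le> 2 * card (snd G) + d * (d + 1) ^ L"
  proof (rule add_mono)
    show "d * (n - card D) \<le> 2 * card (snd G)"
      using twice_card_edges_ge[OF graph, of D d] V unfolding D_def by fastforce
    show "d * card D \<le> d * (d + 1) ^ L"
      using card_low_degree_vertices_le[OF G maximal L] unfolding D_def by (rule mult_le_mono2)
  qed
  finally show ?thesis using G_on girth that by blast
qed

section \<open>Extremal numbers\<close>

lemma F_free_graphs_on_finite_nonempty:
  assumes "graph F" "\<not> forest F"
  shows "finite {G \<in> graphs_on n. F_free F G}" and "{G \<in> graphs_on n. F_free F G} \<noteq> {}"
proof -
  show "finite {G \<in> graphs_on n. F_free F G}" using finite_graphs_on by simp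
  have "F_free F ({0..<n}, {})"
    by (rule F_free_if_no_cycles_upto[OF assms]) (simp add: no_cycles_upto_empty)
  then show "{G \<in> graphs_on n. F_free F G} \<noteq> {}" using empty_graph_on by blast
qed

lemma card_edges_le_ex: "G \<in> graphs_on n \<Longrightarrow> F_free F G \<Longrightarrow> card (snd G) \<le> ex n F"
  unfolding ex_def using finite_graphs_on by (intro Max_ge) auto

lemma count_copies_le_ex_gen: "G \<in> graphs_on n \<Longrightarrow> F_free F G \<Longrightarrow> count_copies H G \<le> ex_gen n H F"
  unfolding ex_gen_def using finite_graphs_on by (intro Max_ge) auto

lemma ex_attained:
  assumes "graph F" "\<not> forest F"
  obtains G where "G \<in> graphs_on n" "F_free F G" "card (snd G) = ex n F"
proof -
  have "ex n F \<in> (\<lambda>G. card (snd G)) ` {G \<in> graphs_on n. F_free F G}"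
    unfolding ex_def using F_free_graphs_on_finite_nonempty[OF assms] by (intro Max_in) auto
  with that show ?thesis by auto
qed

lemma ex_gen_attained:
  assumes "graph F" "\<not> forest F"
  obtains G where "G \<in> graphs_on n" "F_free F G" "count_copies H G = ex_gen n H F"
proof -
  have "ex_gen n H F \<in> (\<lambda>G. count_copies H G) ` {G \<in> graphs_on n. F_free F G}"
    unfolding ex_gen_def using F_free_graphs_on_finite_nonempty[OF assms] by (intro Max_in) auto
  with that show ?thesis by auto
qed

lemma ex_lower_bound:
  assumes F: "graph F" "\<not> forest F"
  shows "d * n \<le> 2 * ex n F + d * (d + 1) ^ card (fst F)"
proof -
  obtain vs where vs: "cycle_in (snd F) vs" "set vs \<subseteq> fst F"
    using F(2) unfolding forest_def has_cycle_iff_cycle_in by blast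
  have "3 \<le> card (fst F)"
    using vs F(1) distinct_card[of vs] card_mono[of "fst F" "set vs"]
    unfolding cycle_in_def graph_def by simp
  then obtain G where G: "G \<in> graphs_on n" "no_cycles_upto (card (fst F)) (snd G)"
    and bound: "d * n \<le> 2 * card (snd G) + d * (d + 1) ^ card (fst F)"
    using exists_graph_no_cycles_upto[of "card (fst F)" n d] by auto
  have "card (snd G) \<le> ex n F"
    using card_edges_le_ex[OF G(1) F_free_if_no_cycles_upto[OF F G(2)]] .
  with bound show ?thesis by linarith
qed

lemma ex_superlinear:
  assumes "graph F" "\<not> forest F"
  shows "filterlim (\<lambda>n. real (ex n F) / real n) at_top sequentially"
  unfolding filterlim_at_top
proof
  fix Z :: real
  obtain d :: nat where d: "4 * Z \<le> real d" using real_arch_simple by blast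
  let ?N = "2 * (d + 1) ^ card (fst F) + 1"
  have "Z \<le> real (ex n F) / real n" if n: "?N \<le> n" for n
  proof -
    have "2 * (d * n) \<le> 4 * ex n F + d * (2 * (d + 1) ^ card (fst F))"
      using ex_lower_bound[OF assms, of d n] by linarith
    also have "\<dots> \<le> 4 * ex n F + d * n" using n by simp
    finally have "d * n \<le> 4 * ex n F" by linarith
    then have "real (d * n) \<le> real (4 * ex n F)" by (simp only: of_nat_le_iff)
    then have "real d * real n \<le> 4 * real (ex n F)" by simp
    moreover have "0 < real n" using n by simp
    ultimately have "real d / 4 \<le> real (ex n F) / real n" by (simp add: field_simps)
    with d show ?thesis by linarith
  qed
  then show "eventually (\<lambda>n. Z \<le> real (ex n F) / real n) sequentially"
    unfolding eventually_sequentially by blast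
qed

lemma ex_tendsto_at_top:
  assumes "graph F" "\<not> forest F"
  shows "filterlim (\<lambda>n. real (ex n F)) at_top sequentially"
proof (rule filterlim_at_top_mono[OF ex_superlinear[OF assms]])
  show "eventually (\<lambda>n. real (ex n F) / real n \<le> real (ex n F)) sequentially"
    unfolding eventually_sequentially
  proof (intro exI allI impI)
    fix n :: nat assume "1 \<le> n"
    then have "real (ex n F) / real n \<le> real (ex n F) / 1" by (intro divide_left_mono) simp_all
    then show "real (ex n F) / real n \<le> real (ex n F)" by simp
  qed
qed

lemma ex_gen_matching_le:
  assumes "graph F" "\<not> forest F"
  shows "ex_gen n (matching k) F * fact k \<le> ex n F ^ k"
proof -
  obtain G where G: "G \<in> graphs_on n" "F_free F G"
    "count_copies (matching k) G = ex_gen n (matching k) F"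
    using ex_gen_attained[OF assms] .
  have graph: "graph G" using G(1) by (simp add: graphs_on_def)
  have "ex_gen n (matching k) F * fact k \<le> (card (snd G) choose k) * fact k"
    using count_copies_matching_le[OF graph, of k] G(3) by simp
  also have "\<dots> \<le> card (snd G) ^ k" by (rule binomial_fact_pow)
  also have "\<dots> \<le> ex n F ^ k" using card_edges_le_ex[OF G(1,2)] by (rule power_mono) simp
  finally show ?thesis .
qed

lemma ex_gen_matching_ratio_le:
  assumes "graph F" "\<not> forest F" "0 < ex n F"
  shows "real (ex_gen n (matching k) F) / (real (ex n F) ^ k / fact k) \<le> 1"
proof -
  have "real (ex_gen n (matching k) F * fact k) \<le> real (ex n F ^ k)"
    using ex_gen_matching_le[OF assms(1,2)] by (simp only: of_nat_le_iff)
  moreover have "0 < real (ex n F) ^ k / fact k" using assms(3) by simp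
  ultimately show ?thesis by (simp add: field_simps)
qed

lemma ex_gen_matching_ge:
  assumes "graph F" "\<not> forest F"
  shows "real (ex n F choose k) - 2 * real n * real (ex n F) ^ (k - 1)
    \<le> real (ex_gen n (matching k) F)"
proof -
  obtain G where G: "G \<in> graphs_on n" "F_free F G" "card (snd G) = ex n F"
    using ex_attained[OF assms] .
  have graph: "graph G" and V: "fst G = {0..<n}" using G(1) by (simp_all add: graphs_on_def)
  have "real (ex n F choose k) - 2 * real n * real (ex n F) ^ (k - 1)
      \<le> real (count_copies (matching k) G)"
    using count_copies_matching_ge[OF graph, of k] G(3) V by simp
  also have "\<dots> \<le> real (ex_gen n (matching k) F)" using count_copies_le_ex_gen[OF G(1,2)] by simp
  finally show ?thesis .
qed

lemma pow_diff_le_binomial_mult_fact: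
  assumes "k \<le> e"
  shows "(real e - real k) ^ k \<le> real (e choose k) * fact k"
proof -
  have "(real e - real k) ^ k = (\<Prod>i<k. real e - real k)" by simp
  also have "\<dots> \<le> (\<Prod>i<k. real e - real i)" using assms by (intro prod_mono) auto
  also have "\<dots> = real (e choose k) * fact k"
    by (simp add: binomial_gbinomial gbinomial_mult_fact' atLeast0LessThan)
  finally show ?thesis .
qed

lemma ex_gen_matching_ratio_ge:
  assumes F: "graph F" "\<not> forest F" and k: "0 < k" "k \<le> ex n F"
  shows "(1 - real k / real (ex n F)) ^ k - 2 * fact k * (real n / real (ex n F))
    \<le> real (ex_gen n (matching k) F) / (real (ex n F) ^ k / fact k)"
proof -
  define e where "e = real (ex n F)"
  define g where "g = real (ex_gen n (matching k) F)"
  have e: "0 < e" using k by (simp add: e_def)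
  have ek: "e ^ k = e ^ (k - 1) * e" using k(1) by (metis Suc_diff_1 power_Suc2)
  have "(e - real k) ^ k - 2 * fact k * real n * e ^ (k - 1)
      \<le> (real (ex n F choose k) - 2 * real n * e ^ (k - 1)) * fact k"
    using pow_diff_le_binomial_mult_fact[OF k(2)] by (simp add: e_def algebra_simps)
  also have "\<dots> \<le> g * fact k"
    using ex_gen_matching_ge[OF F, of n k] by (simp add: e_def g_def)
  finally have "((e - real k) ^ k - 2 * fact k * real n * e ^ (k - 1)) / e ^ k \<le> g * fact k / e ^ k"
    using e by (simp add: divide_right_mono)
  moreover have "(e - real k) ^ k / e ^ k = (1 - real k / e) ^ k"
  proof -
    have "(e - real k) / e = 1 - real k / e" using e by (simp add: diff_divide_distrib)
    then show ?thesis by (metis power_divide)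
  qed
  moreover have "2 * fact k * real n * e ^ (k - 1) / e ^ k = 2 * fact k * (real n / e)"
    using e unfolding ek by simp
  ultimately show ?thesis by (simp add: e_def g_def diff_divide_distrib)
qed

theorem mainTheorem17:
  fixes F :: "'a graph" and k :: nat
  assumes "graph F" and "\<not> forest F" and "k > 0"
  shows "(\<lambda>n. real (ex_gen n (matching k) F)) \<sim>[at_top] (\<lambda>n. real (ex n F) ^ k / fact k)"
proof -
  let ?e = "\<lambda>n. real (ex n F)"
  let ?lower = "\<lambda>n. (1 - real k / ?e n) ^ k - 2 * fact k * (real n / ?e n)"
  let ?ratio = "\<lambda>n. real (ex_gen n (matching k) F) / (?e n ^ k / fact k)"
  have e_large: "filterlim ?e at_top sequentially" by (rule ex_tendsto_at_top[OF assms(1,2)])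
  then have large: "eventually (\<lambda>n. real k \<le> ?e n) sequentially"
    unfolding filterlim_at_top by blast
  have "((\<lambda>n. real k / ?e n) \<longlongrightarrow> 0) sequentially"
    using e_large by (intro tendsto_divide_0[OF tendsto_const] filterlim_at_top_imp_at_infinity)
  moreover have "((\<lambda>n. real n / ?e n) \<longlongrightarrow> 0) sequentially"
    using tendsto_inverse_0_at_top[OF ex_superlinear[OF assms(1,2)]] by simp
  ultimately have "(?lower \<longlongrightarrow> (1 - 0) ^ k - 2 * fact k * 0) sequentially"
    by (intro tendsto_intros)
  then have lower_limit: "(?lower \<longlongrightarrow> 1) sequentially" by simp
  have lower_bound: "eventually (\<lambda>n. ?lower n \<le> ?ratio n) sequentially"
    using large by eventually_elim (use ex_gen_matching_ratio_ge[OF assms(1,2,3)] in simp)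
  have upper_bound: "eventually (\<lambda>n. ?ratio n \<le> 1) sequentially"
    using large by eventually_elim (use ex_gen_matching_ratio_le[OF assms(1,2)] assms(3) in simp)
  have "(?ratio \<longlongrightarrow> 1) sequentially"
    by (rule tendsto_sandwich[OF lower_bound upper_bound lower_limit tendsto_const])
  then show ?thesis by (rule asymp_equivI')
qed

end
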